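(* Let $R$ be a finite transitive permutation group of degree $n$. Then $R$ has at most \[ 7.3722 \cdot n^{\frac{\log_2 n}{4} + 1.8919} \] systems of imprimitivity. *)

theory Defs
  imports Complex_Main "HOL-Algebra.Bij" "HOL-Library.Disjoint_Sets"
begin

definition transitive_perm_group :: "'a set \<Rightarrow> ('a \<Rightarrow> 'a) set \<Rightarrow> bool" where
  "transitive_perm_group \<Omega> R \<longleftrightarrow>
     subgroup R (BijGroup \<Omega>) \<and> (\<forall>x\<in>\<Omega>. \<forall>y\<in>\<Omega>. \<exists>g\<in>R. g x = y)"

definition systems_of_imprimitivity :: "'a set \<Rightarrow> ('a \<Rightarrow> 'a) set \<Rightarrow> 'a set set set" where
  "systems_of_imprimitivity \<Omega> R =
     {P. partition_on \<Omega> P \<and> (\<forall>g\<in>R. \<forall>B\<in>P. g ` B \<in> P)}"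

end

theory Submission
  imports Defs
begin

text \<open>A system of imprimitivity of a transitive group R is the R-orbit of its block through a
  fixed point x, so it suffices to count the blocks containing x. In a transitive group a
  nonempty block properly contained in another block has at most half its size. Let N(b, C)
  be the number of blocks of size b containing the block C. Counting the pairs (B, s) with
  s \<in> B - C, and observing that the blocks containing both C and s contain the block D
  obtained by intersecting them, with |D| \<ge> 2|C|, gives N(b, C) \<le> (2n/b) max N(b, D).
  By induction N(b, C) \<le> (2n/b) powr log2 (b/|C|), and maximising (2n/b) powr log2 b
  over b gives at most n 2 powr ((log2 n + 1)^2/4) = 2 powr (1/4) n powr (log2 n / 4 + 3/2)
  blocks through x, which is below the stated bound.\<close>

definition is_block :: "'a set \<Rightarrow> ('a \<Rightarrow> 'a) set \<Rightarrow> 'a set \<Rightarrow> bool" where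
  "is_block \<Omega> R B \<longleftrightarrow> B \<subseteq> \<Omega> \<and> (\<forall>g\<in>R. g ` B = B \<or> g ` B \<inter> B = {})"

definition blocks_above :: "'a set \<Rightarrow> ('a \<Rightarrow> 'a) set \<Rightarrow> nat \<Rightarrow> 'a set \<Rightarrow> 'a set set" where
  "blocks_above \<Omega> R b C = {B. is_block \<Omega> R B \<and> card B = b \<and> C \<subseteq> B}"

lemma perm_group_bij_betw:
  assumes "subgroup R (BijGroup \<Omega>)" and "g \<in> R"
  shows "bij_betw g \<Omega> \<Omega>"
  using subgroup.subset[OF assms(1)] assms(2) by (auto simp: BijGroup_def Bij_def)

lemma is_block_Inter:
  assumes R: "subgroup R (BijGroup \<Omega>)" and "F \<noteq> {}"
    and blocks: "\<And>B. B \<in> F \<Longrightarrow> is_block \<Omega> R B"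
  shows "is_block \<Omega> R (\<Inter>F)"
  unfolding is_block_def
proof (intro conjI ballI)
  show "\<Inter>F \<subseteq> \<Omega>" using \<open>F \<noteq> {}\<close> blocks unfolding is_block_def by blast
  fix g assume g: "g \<in> R"
  show "g ` \<Inter>F = \<Inter>F \<or> g ` \<Inter>F \<inter> \<Inter>F = {}"
  proof (rule disjCI)
    assume "g ` \<Inter>F \<inter> \<Inter>F \<noteq> {}"
    then obtain y where "y \<in> \<Inter>F" "g y \<in> \<Inter>F" by blast
    then have fixed: "g ` B = B" if "B \<in> F" for B
      using blocks[OF that] g that unfolding is_block_def by blast
    have "inj_on g \<Omega>" using perm_group_bij_betw[OF R g] by (rule bij_betw_imp_inj_on)
    moreover have "\<forall>B\<in>F. B \<subseteq> \<Omega>" using blocks unfolding is_block_def by blast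
    ultimately have "g ` \<Inter>F = (\<Inter>B\<in>F. g ` B)"
      using image_INT[where B = "\<lambda>B. B"] \<open>F \<noteq> {}\<close> by (metis all_not_in_conv image_ident)
    then show "g ` \<Inter>F = \<Inter>F" using fixed by simp
  qed
qed

text \<open>The element of R moving a point of C to a point of B - C maps B onto itself and C
  onto a disjoint copy of C inside B.\<close>
lemma card_block_double:
  assumes tr: "transitive_perm_group \<Omega> R" and "finite \<Omega>"
    and C: "is_block \<Omega> R C" "C \<noteq> {}" and B: "is_block \<Omega> R B" "C \<subset> B"
  shows "2 * card C \<le> card B"
proof -
  obtain x y where "x \<in> C" "y \<in> B" "y \<notin> C" using C(2) B(2) by blast
  moreover have "x \<in> \<Omega>" "y \<in> \<Omega>" using B \<open>x \<in> C\<close> \<open>y \<in> B\<close> unfolding is_block_def by auto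
  ultimately obtain g where g: "g \<in> R" "g x = y"
    using tr unfolding transitive_perm_group_def by blast
  have "y \<in> g ` B \<inter> B" using g \<open>y \<in> B\<close> \<open>x \<in> C\<close> B(2) by blast
  then have "g ` B = B" using B(1) g(1) unfolding is_block_def by blast
  then have "g ` C \<subseteq> B" using B(2) by blast
  have "y \<in> g ` C" using g \<open>x \<in> C\<close> by blast
  then have "g ` C \<inter> C = {}" using C(1) g(1) \<open>y \<notin> C\<close> unfolding is_block_def by blast
  have "finite B" using B(1) \<open>finite \<Omega>\<close> unfolding is_block_def by (blast intro: finite_subset)
  then have "finite C" using B(2) by (blast intro: finite_subset)
  have "bij_betw g \<Omega> \<Omega>"
    using tr g(1) unfolding transitive_perm_group_def by (blast intro: perm_group_bij_betw)
  then have "inj_on g C" using C(1) unfolding is_block_def by (meson bij_betw_imp_inj_on inj_on_subset)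
  then have "2 * card C = card (C \<union> g ` C)"
    using \<open>finite C\<close> \<open>g ` C \<inter> C = {}\<close> by (simp add: card_Un_disjoint card_image Int_commute)
  also have "\<dots> \<le> card B"
    using \<open>finite B\<close> \<open>g ` C \<subseteq> B\<close> B(2) by (intro card_mono) auto
  finally show ?thesis .
qed

lemma finite_blocks_above:
  assumes "finite \<Omega>"
  shows "finite (blocks_above \<Omega> R b C)"
  by (rule finite_subset[of _ "Pow \<Omega>"]) (use assms in \<open>auto simp: blocks_above_def is_block_def\<close>)

lemma blocks_above_card_self:
  assumes "finite \<Omega>"
  shows "blocks_above \<Omega> R (card C) C \<subseteq> {C}"
proof
  fix B assume "B \<in> blocks_above \<Omega> R (card C) C"
  then have "finite B" "C \<subseteq> B" "card C = card B"
    using assms by (auto simp: blocks_above_def is_block_def intro: finite_subset)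
  then show "B \<in> {C}" using card_subset_eq by blast
qed

lemma blocks_above_through_point:
  assumes R: "subgroup R (BijGroup \<Omega>)" and "finite \<Omega>" and "s \<notin> C"
    and T: "{B \<in> blocks_above \<Omega> R b C. s \<in> B} \<noteq> {}"
  obtains D where "is_block \<Omega> R D" "C \<subset> D" "card D \<le> b"
    "{B \<in> blocks_above \<Omega> R b C. s \<in> B} \<subseteq> blocks_above \<Omega> R b D"
proof
  let ?T = "{B \<in> blocks_above \<Omega> R b C. s \<in> B}"
  show "is_block \<Omega> R (\<Inter>?T)" using is_block_Inter[OF R T] by (simp add: blocks_above_def)
  show "C \<subset> \<Inter>?T" using T \<open>s \<notin> C\<close> by (auto simp: blocks_above_def)
  obtain B where "B \<in> ?T" using T by blast
  then have "finite B" "card B = b"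
    using \<open>finite \<Omega>\<close> by (auto simp: blocks_above_def is_block_def intro: finite_subset)
  then show "card (\<Inter>?T) \<le> b" using \<open>B \<in> ?T\<close> by (metis Inter_lower card_mono)
  show "?T \<subseteq> blocks_above \<Omega> R b (\<Inter>?T)" by (auto simp: blocks_above_def)
qed

lemma double_counting_le:
  fixes M :: real
  assumes "finite \<Omega>" and "0 \<le> M"
    and S: "\<And>B. B \<in> S \<Longrightarrow> B \<subseteq> \<Omega> \<and> C \<subseteq> B \<and> card B = b"
    and through: "\<And>s. s \<in> \<Omega> - C \<Longrightarrow> real (card {B \<in> S. s \<in> B}) \<le> M"
  shows "real (card S) * (real b - real (card C)) \<le> real (card \<Omega>) * M"
proof (cases "S = {}")
  case False
  then obtain B0 where "B0 \<in> S" by blast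
  then have "finite B0" "C \<subseteq> B0" "card B0 = b"
    using S[of B0] \<open>finite \<Omega>\<close> by (auto intro: finite_subset)
  then have "finite C" "card C \<le> b" by (auto intro: finite_subset card_mono)
  have "finite S" using S \<open>finite \<Omega>\<close> by (blast intro: finite_subset[of S "Pow \<Omega>"])
  have "card S * (b - card C) = (\<Sum>B\<in>S. card {s \<in> \<Omega> - C. s \<in> B})"
  proof -
    have "card {s \<in> \<Omega> - C. s \<in> B} = b - card C" if "B \<in> S" for B
      using S[OF that] \<open>finite C\<close> by (metis Diff_Int_distrib2 Int_absorb1
        Int_def card_Diff_subset inf_commute)
    then show ?thesis by simp
  qed
  also have "\<dots> = (\<Sum>s\<in>\<Omega> - C. card {B \<in> S. s \<in> B})"
    using \<open>finite S\<close> \<open>finite \<Omega>\<close> by (intro sum_multicount_gen) auto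
  finally have "real (card S) * (real b - real (card C)) = (\<Sum>s\<in>\<Omega> - C. real (card {B \<in> S. s \<in> B}))"
    using \<open>card C \<le> b\<close> by (metis of_nat_diff of_nat_mult of_nat_sum)
  also have "\<dots> \<le> real (card (\<Omega> - C)) * M" by (rule sum_bounded_above) (rule through)
  also have "\<dots> \<le> real (card \<Omega>) * M"
    using \<open>finite \<Omega>\<close> \<open>0 \<le> M\<close> by (intro mult_right_mono) (simp_all add: card_mono)
  finally show ?thesis .
qed (use assms in simp)

lemma powr_log2_ratio_le:
  fixes q b c d :: real
  assumes "1 \<le> q" and "0 < b" and "0 < c" and "2 * c \<le> d"
  shows "q powr log 2 (b / d) \<le> q powr (log 2 (b / c) - 1)"
proof (rule powr_mono[OF _ \<open>1 \<le> q\<close>])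
  have "log 2 (b / d) \<le> log 2 (b / (2 * c))"
    using assms by (intro log_mono divide_left_mono) auto
  also have "\<dots> = log 2 (b / c) - 1"
    using assms by (simp add: log_divide log_mult)
  finally show "log 2 (b / d) \<le> log 2 (b / c) - 1" .
qed

lemma card_blocks_above_le_recursive:
  fixes M :: real
  assumes tr: "transitive_perm_group \<Omega> R" and "finite \<Omega>"
    and C: "is_block \<Omega> R C" "C \<noteq> {}" "card C < b" and "0 \<le> M"
    and larger: "\<And>D. is_block \<Omega> R D \<Longrightarrow> 2 * card C \<le> card D \<Longrightarrow> card D \<le> b
                   \<Longrightarrow> real (card (blocks_above \<Omega> R b D)) \<le> M"
  shows "real (card (blocks_above \<Omega> R b C)) \<le> 2 * real (card \<Omega>) / real b * M"
proof (cases "blocks_above \<Omega> R b C = {}")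
  case False
  let ?S = "blocks_above \<Omega> R b C"
  have R: "subgroup R (BijGroup \<Omega>)" using tr by (simp add: transitive_perm_group_def)
  obtain B0 where "B0 \<in> ?S" using False by blast
  then have "is_block \<Omega> R B0" "C \<subset> B0" "card B0 = b"
    using \<open>card C < b\<close> by (auto simp: blocks_above_def)
  then have "2 * card C \<le> b" using card_block_double[OF tr \<open>finite \<Omega>\<close> C(1,2)] by blast
  have "real (card {B \<in> ?S. s \<in> B}) \<le> M" if "s \<in> \<Omega> - C" for s
  proof (cases "{B \<in> ?S. s \<in> B} = {}")
    case False
    from that have "s \<notin> C" by blast
    from this False obtain D where D: "is_block \<Omega> R D" "C \<subset> D" "card D \<le> b"
      "{B \<in> ?S. s \<in> B} \<subseteq> blocks_above \<Omega> R b D"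
      by (rule blocks_above_through_point[OF R \<open>finite \<Omega>\<close>])
    have "2 * card C \<le> card D" using card_block_double[OF tr \<open>finite \<Omega>\<close> C(1,2) D(1,2)] .
    then show ?thesis
      using larger[OF D(1) _ D(3)] card_mono[OF finite_blocks_above[OF \<open>finite \<Omega>\<close>] D(4)]
      by fastforce
  next
    case True
    show ?thesis unfolding True using \<open>0 \<le> M\<close> by simp
  qed
  then have "real (card ?S) * (real b - real (card C)) \<le> real (card \<Omega>) * M"
    using \<open>finite \<Omega>\<close> \<open>0 \<le> M\<close> by (intro double_counting_le) (auto simp: blocks_above_def is_block_def)
  moreover have "real b / 2 \<le> real b - real (card C)" using \<open>2 * card C \<le> b\<close> by linarith
  ultimately have "real (card ?S) * (real b / 2) \<le> real (card \<Omega>) * M"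
    by (meson mult_left_mono of_nat_0_le_iff order_trans)
  then show ?thesis using \<open>card C < b\<close> by (simp add: field_simps)
qed (use \<open>0 \<le> M\<close> in simp)

lemma card_blocks_above_le:
  assumes tr: "transitive_perm_group \<Omega> R" and "finite \<Omega>"
  shows "is_block \<Omega> R C \<Longrightarrow> C \<noteq> {} \<Longrightarrow> real (card (blocks_above \<Omega> R b C))
           \<le> (2 * real (card \<Omega>) / real b) powr log 2 (real b / real (card C))"
proof (induction "b - card C" arbitrary: C rule: less_induct)
  case less
  let ?S = "blocks_above \<Omega> R b C"
  define q where "q = 2 * real (card \<Omega>) / real b"
  define L where "L = log 2 (real b / real (card C))"
  have "real (card ?S) \<le> q powr L"
  proof (cases "?S = {}")
    case False
    then obtain B0 where "B0 \<in> ?S" by blast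
    then have "finite B0" "C \<subseteq> B0" "card B0 = b" "B0 \<subseteq> \<Omega>"
      using \<open>finite \<Omega>\<close> by (auto simp: blocks_above_def is_block_def intro: finite_subset)
    then have "finite C" "card C \<le> b" "b \<le> card \<Omega>"
      using \<open>finite \<Omega>\<close> by (auto intro: finite_subset card_mono)
    then have "0 < card C" using less.prems(2) by (simp add: card_gt_0_iff)
    then have "1 \<le> q" using \<open>card C \<le> b\<close> \<open>b \<le> card \<Omega>\<close> by (simp add: q_def field_simps)
    consider "card C = b" | "card C < b" using \<open>card C \<le> b\<close> by linarith
    then show ?thesis
    proof cases
      case 1
      then have "card ?S \<le> 1"
        using blocks_above_card_self[OF \<open>finite \<Omega>\<close>, of R C] card_mono[of "{C}"] by force
      then show ?thesis using \<open>1 \<le> q\<close> \<open>0 < card C\<close> 1 by (simp add: L_def)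
    next
      case 2
      have larger: "real (card (blocks_above \<Omega> R b D)) \<le> q powr (L - 1)"
        if D: "is_block \<Omega> R D" "2 * card C \<le> card D" "card D \<le> b" for D
      proof -
        have "b - card D < b - card C" using D(2,3) \<open>0 < card C\<close> by linarith
        moreover have "D \<noteq> {}" using D(2) \<open>0 < card C\<close> by auto
        ultimately have "real (card (blocks_above \<Omega> R b D)) \<le> q powr log 2 (real b / real (card D))"
          unfolding q_def using D(1) by (intro less.hyps)
        also have "\<dots> \<le> q powr (L - 1)" unfolding L_def
          using \<open>1 \<le> q\<close> \<open>card C \<le> b\<close> \<open>0 < card C\<close> D(2) by (intro powr_log2_ratio_le) auto
        finally show ?thesis .
      qed
      have "real (card ?S) \<le> 2 * real (card \<Omega>) / real b * q powr (L - 1)"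
        by (rule card_blocks_above_le_recursive[OF tr \<open>finite \<Omega>\<close> less.prems 2 _ larger]) simp
      also have "\<dots> = q powr L"
        unfolding q_def[symmetric] using \<open>1 \<le> q\<close> by (simp add: powr_diff)
      finally show ?thesis .
    qed
  qed simp
  then show ?case unfolding q_def L_def .
qed

lemma ratio_powr_log2_le:
  fixes n b :: real
  assumes "1 \<le> b" and "b \<le> n"
  shows "(2 * n / b) powr log 2 b \<le> 2 powr ((log 2 n + 1)\<^sup>2 / 4)"
proof -
  define k j where "k = log 2 n" and "j = log 2 b"
  have "2 * n / b = 2 powr (1 + k - j)"
    using assms by (simp add: k_def j_def powr_diff powr_add)
  then have "(2 * n / b) powr log 2 b = 2 powr ((1 + k - j) * j)"
    by (simp add: j_def powr_powr)
  also have "\<dots> \<le> 2 powr ((k + 1)\<^sup>2 / 4)"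
  proof (rule powr_mono)
    have "0 \<le> (k + 1 - 2 * j)\<^sup>2" by simp
    then show "(1 + k - j) * j \<le> (k + 1)\<^sup>2 / 4" by (simp add: power2_eq_square algebra_simps)
  qed simp
  finally show ?thesis unfolding k_def .
qed

lemma blocks_through_point_eq_UN_blocks_above:
  assumes "finite \<Omega>"
  shows "{B. is_block \<Omega> R B \<and> x \<in> B} = (\<Union>b\<in>{1..card \<Omega>}. blocks_above \<Omega> R b {x})"
proof -
  have "1 \<le> card B \<and> card B \<le> card \<Omega>" if "is_block \<Omega> R B" "x \<in> B" for B
  proof -
    have "finite B" "card B \<le> card \<Omega>"
      using that(1) assms by (auto simp: is_block_def intro: finite_subset card_mono)
    moreover have "0 < card B" using \<open>finite B\<close> that(2) card_gt_0_iff by blast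
    ultimately show ?thesis by linarith
  qed
  then show ?thesis by (auto simp: blocks_above_def)
qed

lemma card_blocks_through_point_le:
  assumes tr: "transitive_perm_group \<Omega> R" and "finite \<Omega>" and "x \<in> \<Omega>"
  shows "real (card {B. is_block \<Omega> R B \<and> x \<in> B})
           \<le> real (card \<Omega>) * 2 powr ((log 2 (real (card \<Omega>)) + 1)\<^sup>2 / 4)"
proof -
  let ?n = "card \<Omega>"
  have "card {B. is_block \<Omega> R B \<and> x \<in> B} \<le> (\<Sum>b\<in>{1..?n}. card (blocks_above \<Omega> R b {x}))"
    unfolding blocks_through_point_eq_UN_blocks_above[OF \<open>finite \<Omega>\<close>] by (simp add: card_UN_le)
  then have "real (card {B. is_block \<Omega> R B \<and> x \<in> B})
      \<le> (\<Sum>b\<in>{1..?n}. real (card (blocks_above \<Omega> R b {x})))"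
    by (metis of_nat_le_iff of_nat_sum)
  also have "\<dots> \<le> (\<Sum>b\<in>{1..?n}. 2 powr ((log 2 (real ?n) + 1)\<^sup>2 / 4))"
  proof (rule sum_mono)
    fix b assume b: "b \<in> {1..?n}"
    have "is_block \<Omega> R {x}" using \<open>x \<in> \<Omega>\<close> by (auto simp: is_block_def)
    then have "real (card (blocks_above \<Omega> R b {x})) \<le> (2 * real ?n / real b) powr log 2 (real b)"
      using card_blocks_above_le[OF tr \<open>finite \<Omega>\<close> _ _, of "{x}" b] by simp
    also have "\<dots> \<le> 2 powr ((log 2 (real ?n) + 1)\<^sup>2 / 4)"
      using b by (intro ratio_powr_log2_le) auto
    finally show "real (card (blocks_above \<Omega> R b {x})) \<le> 2 powr ((log 2 (real ?n) + 1)\<^sup>2 / 4)" .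
  qed
  finally show ?thesis by simp
qed

lemma system_of_imprimitivity_orbit_of_block:
  assumes tr: "transitive_perm_group \<Omega> R" and "x \<in> \<Omega>"
    and P: "P \<in> systems_of_imprimitivity \<Omega> R"
  obtains B where "is_block \<Omega> R B" "x \<in> B" "P = (\<lambda>g. g ` B) ` R"
proof -
  have part: "partition_on \<Omega> P" and inv: "\<And>g B. g \<in> R \<Longrightarrow> B \<in> P \<Longrightarrow> g ` B \<in> P"
    using P unfolding systems_of_imprimitivity_def by auto
  then obtain B where B: "B \<in> P" "x \<in> B" using \<open>x \<in> \<Omega>\<close> unfolding partition_on_def by blast
  have meet: "C = D" if "C \<in> P" "D \<in> P" "y \<in> C" "y \<in> D" for C D y
    using part that unfolding partition_on_def disjoint_def by blast
  have "is_block \<Omega> R B"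
    using part B inv meet unfolding is_block_def partition_on_def by blast
  moreover have "P \<subseteq> (\<lambda>g. g ` B) ` R"
  proof
    fix C assume "C \<in> P"
    then have "C \<noteq> {}" "C \<subseteq> \<Omega>" using part by (auto simp: partition_on_def)
    then obtain y where "y \<in> C" "y \<in> \<Omega>" by blast
    then obtain g where g: "g \<in> R" "g x = y" using tr \<open>x \<in> \<Omega>\<close> unfolding transitive_perm_group_def by blast
    then have "g ` B = C" using meet[OF inv[OF g(1) B(1)] \<open>C \<in> P\<close>] \<open>y \<in> C\<close> B(2) by blast
    then show "C \<in> (\<lambda>g. g ` B) ` R" using g(1) by blast
  qed
  moreover have "(\<lambda>g. g ` B) ` R \<subseteq> P" using inv B(1) by blast
  ultimately show thesis using that B(2) by blast
qed

lemma card_systems_of_imprimitivity_le: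
  assumes tr: "transitive_perm_group \<Omega> R" and "finite \<Omega>" and "x \<in> \<Omega>"
  shows "card (systems_of_imprimitivity \<Omega> R) \<le> card {B. is_block \<Omega> R B \<and> x \<in> B}"
proof -
  have "finite {B. is_block \<Omega> R B \<and> x \<in> B}"
    using \<open>finite \<Omega>\<close> by (auto simp: is_block_def intro: finite_subset[of _ "Pow \<Omega>"])
  moreover have "systems_of_imprimitivity \<Omega> R \<subseteq> (\<lambda>B. (\<lambda>g. g ` B) ` R) ` {B. is_block \<Omega> R B \<and> x \<in> B}"
  proof
    fix P assume "P \<in> systems_of_imprimitivity \<Omega> R"
    then obtain B where "is_block \<Omega> R B" "x \<in> B" "P = (\<lambda>g. g ` B) ` R"
      by (rule system_of_imprimitivity_orbit_of_block[OF tr \<open>x \<in> \<Omega>\<close>])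
    then show "P \<in> (\<lambda>B. (\<lambda>g. g ` B) ` R) ` {B. is_block \<Omega> R B \<and> x \<in> B}" by blast
  qed
  ultimately show ?thesis by (meson card_image_le card_mono finite_imageI le_trans)
qed

lemma mult_two_powr_log2_le:
  fixes n :: real
  assumes "1 \<le> n"
  shows "n * 2 powr ((log 2 n + 1)\<^sup>2 / 4) \<le> 7.3722 * n powr (log 2 n / 4 + 1.8919)"
proof -
  define k where "k = log 2 n"
  have "0 \<le> k" and n: "n = 2 powr k" using assms by (simp_all add: k_def)
  have "n * 2 powr ((k + 1)\<^sup>2 / 4) = 2 powr (1 / 4) * 2 powr (k\<^sup>2 / 4 + 3 / 2 * k)"
    unfolding n by (simp add: powr_add[symmetric] power2_eq_square field_simps)
  also have "\<dots> \<le> 7.3722 * 2 powr (k * (k / 4 + 1.8919))"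
  proof (rule mult_mono)
    have "2 powr (1 / 4 :: real) \<le> 2 powr 1" by (rule powr_mono) auto
    then show "2 powr (1 / 4 :: real) \<le> 7.3722" by simp
    show "2 powr (k\<^sup>2 / 4 + 3 / 2 * k) \<le> 2 powr (k * (k / 4 + 1.8919))"
      using \<open>0 \<le> k\<close> by (intro powr_mono) (auto simp: power2_eq_square algebra_simps)
  qed auto
  also have "\<dots> = 7.3722 * n powr (k / 4 + 1.8919)"
    unfolding n by (simp add: powr_powr)
  finally show ?thesis unfolding k_def .
qed

theorem corollary1p2:
  fixes \<Omega> :: "'a set" and R :: "('a \<Rightarrow> 'a) set" and n :: nat
  assumes "finite \<Omega>" and "\<Omega> \<noteq> {}" and "n = card \<Omega>"
    and "transitive_perm_group \<Omega> R"
  shows "real (card (systems_of_imprimitivity \<Omega> R))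
           \<le> 7.3722 * real n powr (log 2 (real n) / 4 + 1.8919)"
proof -
  obtain x where "x \<in> \<Omega>" using \<open>\<Omega> \<noteq> {}\<close> by blast
  have "1 \<le> real n" using assms(1-3) by (simp add: Suc_leI card_gt_0_iff)
  have "real (card (systems_of_imprimitivity \<Omega> R)) \<le> real (card {B. is_block \<Omega> R B \<and> x \<in> B})"
    using card_systems_of_imprimitivity_le[OF assms(4,1) \<open>x \<in> \<Omega>\<close>] by simp
  also have "\<dots> \<le> real n * 2 powr ((log 2 (real n) + 1)\<^sup>2 / 4)"
    using card_blocks_through_point_le[OF assms(4,1) \<open>x \<in> \<Omega>\<close>] \<open>n = card \<Omega>\<close> by simp
  also have "\<dots> \<le> 7.3722 * real n powr (log 2 (real n) / 4 + 1.8919)"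
    using \<open>1 \<le> real n\<close> by (rule mult_two_powr_log2_le)
  finally show ?thesis .
qed

end
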